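(* Let $X$ and $C$ be random variables with joint distribution $p(X,C)$ on finite support $\mathcal X\times\mathcal C$. For $x\in\mathcal X$ let $\mathbf x=[p(c,x)]_{c\in\mathcal C}\in[0,1]^{|\mathcal C|}$. For $x\ne y$ in $\mathcal X$ let $\pi_{x,y}:\mathcal X\to(\mathcal X\setminus\{x,y\})\cup\{z\}$ ($z\notin\mathcal X$ a new symbol) be the identity on $\mathcal X\setminus\{x,y\}$ and send $x,y$ to $z$, and let $\mathrm{MIL}(\mathbf x,\mathbf y)=I(X;C)-I(\pi_{x,y}(X);C)$. Then $$\mathrm{MIL}(\mathbf x,\mathbf y)=K_1(\mathbf x,\mathbf y)-K_2(\mathbf x,\mathbf y),$$ where $K_1(\mathbf x,\mathbf y)=k\big(\sum_{c\in\mathcal C}p(c,x),\sum_{c\in\mathcal C}p(c,y)\big)$ and $K_2(\mathbf x,\mathbf y)=\sum_{c\in\mathcal C}k(p(c,x),p(c,y))$, and $K_1$, $K_2$ are positive definite kernels on $[0,1]^{|\mathcal C|}$. Hence $\mathrm{MIL}$ is a Kreĭn kernel on $[0,1]^{|\mathcal C|}$.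
   Context: $k(a,b)=a\ln\frac{a+b}{a}+b\ln\frac{a+b}{b}=\eta(a)+\eta(b)-\eta(a+b)$ with $\eta(u)=-u\ln u$, $0\ln0=0$. $I(\cdot;\cdot)$ is mutual information. A symmetric real map $k$ on $\mathcal X\times\mathcal X$ is a positive definite kernel if $\sum_{i,j}a_ia_jk(x_i,x_j)\ge0$ for all finite choices of reals $a_i$ and points $x_i$; it is a Kreĭn kernel if it equals $k_1-k_2$ for two positive definite kernels $k_1,k_2$. *)

theory Defs
  imports Complex_Main
begin

definition eta :: "real \<Rightarrow> real" where
  "eta u = (if u = 0 then 0 else - u * ln u)"

definition kfun :: "real \<Rightarrow> real \<Rightarrow> real" where
  "kfun a b = eta a + eta b - eta (a + b)"

definition mutual_info :: "'a set \<Rightarrow> 'c set \<Rightarrow> ('a \<Rightarrow> 'c \<Rightarrow> real) \<Rightarrow> real" where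
  "mutual_info A C p =
     (\<Sum>a\<in>A. \<Sum>c\<in>C. (if p a c = 0 then 0
        else p a c * ln (p a c / ((\<Sum>c'\<in>C. p a c') * (\<Sum>a'\<in>A. p a' c)))))"

text \<open>Joint pmf of (pi_{x,y}(X), C): the new symbol z is None, other points a are Some a.\<close>
definition merge_pmf :: "('x \<Rightarrow> 'c \<Rightarrow> real) \<Rightarrow> 'x \<Rightarrow> 'x \<Rightarrow> 'x option \<Rightarrow> 'c \<Rightarrow> real" where
  "merge_pmf p x y u c = (case u of None \<Rightarrow> p x c + p y c | Some a \<Rightarrow> p a c)"

definition merged_support :: "'x set \<Rightarrow> 'x \<Rightarrow> 'x \<Rightarrow> 'x option set" where
  "merged_support X x y = insert None (Some ` (X - {x, y}))"

definition MIL :: "('x \<Rightarrow> 'c \<Rightarrow> real) \<Rightarrow> 'x set \<Rightarrow> 'c set \<Rightarrow> 'x \<Rightarrow> 'x \<Rightarrow> real" where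
  "MIL p X C x y = mutual_info X C p - mutual_info (merged_support X x y) C (merge_pmf p x y)"

definition K1 :: "('c::finite \<Rightarrow> real) \<Rightarrow> ('c \<Rightarrow> real) \<Rightarrow> real" where
  "K1 v w = kfun (\<Sum>c\<in>UNIV. v c) (\<Sum>c\<in>UNIV. w c)"

definition K2 :: "('c::finite \<Rightarrow> real) \<Rightarrow> ('c \<Rightarrow> real) \<Rightarrow> real" where
  "K2 v w = (\<Sum>c\<in>UNIV. kfun (v c) (w c))"

definition pd_kernel :: "'a set \<Rightarrow> ('a \<Rightarrow> 'a \<Rightarrow> real) \<Rightarrow> bool" where
  "pd_kernel S K \<longleftrightarrow> (\<forall>u\<in>S. \<forall>v\<in>S. K u v = K v u) \<and>
     (\<forall>n::nat. \<forall>a::nat \<Rightarrow> real. \<forall>xs::nat \<Rightarrow> 'a. (\<forall>i<n. xs i \<in> S) \<longrightarrow>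
        0 \<le> (\<Sum>i<n. \<Sum>j<n. a i * a j * K (xs i) (xs j)))"

definition krein_kernel :: "'a set \<Rightarrow> ('a \<Rightarrow> 'a \<Rightarrow> real) \<Rightarrow> bool" where
  "krein_kernel S K \<longleftrightarrow> (\<exists>K1 K2. pd_kernel S K1 \<and> pd_kernel S K2 \<and>
     (\<forall>u\<in>S. \<forall>v\<in>S. K u v = K1 u v - K2 u v))"

definition unit_cube :: "('c \<Rightarrow> real) set" where
  "unit_cube = {v. \<forall>c. 0 \<le> v c \<and> v c \<le> 1}"

end

theory Submission
  imports Defs "HOL-Analysis.Analysis" "HOL-Real_Asymp.Real_Asymp"
begin

text \<open>
  The identity for \<open>MIL\<close> is bookkeeping: mutual information is a sum of row terms
  \<open>\<eta>(\<Sum>c. f c) - (\<Sum>c. \<eta>(f c)) - (\<Sum>c. f c * ln (Q c))\<close> over the rows \<open>f\<close> of the joint pmf,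
  \<open>Q\<close> being the column marginal. Merging \<open>x\<close> and \<open>y\<close> keeps \<open>Q\<close> and all other rows, and
  the \<open>ln Q\<close> parts are linear in the row, so only the \<open>\<eta>\<close> parts of the rows of \<open>x\<close>,
  \<open>y\<close> and \<open>x + y\<close> survive.

  Positive definiteness comes from an integral representation. With
  \<open>\<phi> r a = \<integral>\<^sub>0\<^sup>a exp (-r s) ds\<close> (\<open>kfun_feature\<close>) and \<open>1 / (s + t) = \<integral>\<^sub>0\<^sup>\<infinity> exp (-r (s + t)) dr\<close>, Tonelli gives
  \<open>k a b = \<integral>\<^sub>0\<^sup>a \<integral>\<^sub>0\<^sup>b 1 / (s + t) dt ds = \<integral>\<^sub>0\<^sup>\<infinity> \<phi> r a * \<phi> r b dr\<close>, so every Gram form of \<open>k\<close>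
  is \<open>\<integral>\<^sub>0\<^sup>\<infinity> (\<Sum>i. c\<^sub>i * \<phi> r x\<^sub>i)\<^sup>2 dr \<ge> 0\<close>.
\<close>

definition kfun_feature :: "real \<Rightarrow> real \<Rightarrow> real" where
  "kfun_feature r a = (if r = 0 then a else (1 - exp (- (r * a))) / r)"

lemma kfun_feature_nonneg:
  assumes "0 \<le> a"
  shows "0 \<le> kfun_feature r a"
proof (cases r "0::real" rule: linorder_cases)
  case less
  then have "1 \<le> exp (- (r * a))"
    using assms by (simp add: mult_nonpos_nonneg)
  with less show ?thesis by (simp add: kfun_feature_def divide_nonpos_neg)
qed (use assms in \<open>auto simp: kfun_feature_def divide_nonneg_pos\<close>)

lemma kfun_feature_zero [simp]: "kfun_feature r 0 = 0"
  by (simp add: kfun_feature_def)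

lemma kfun_feature_measurable [measurable]: "(\<lambda>r. kfun_feature r a) \<in> borel_measurable borel"
  unfolding kfun_feature_def by measurable

lemma has_integral_exp_shift:
  assumes "0 \<le> a"
  shows "((\<lambda>t. exp (- (r * (s + t)))) has_integral exp (- (r * s)) * kfun_feature r a) {0..a}"
proof (cases "r = 0")
  case True
  then show ?thesis using assms has_integral_const_real[of "1::real" 0 a]
    by (simp add: kfun_feature_def)
next
  case False
  have "((\<lambda>t. exp (- (r * (s + t)))) has_integral
      (- exp (- (r * (s + a))) / r) - (- exp (- (r * (s + 0))) / r)) {0..a}"
    using assms False
    by (intro fundamental_theorem_of_calculus)
       (auto intro!: derivative_eq_intros simp: has_real_derivative_iff_has_vector_derivative[symmetric])
  moreover have "exp (- (r * (s + a))) = exp (- (r * s)) * exp (- (r * a))"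
    by (simp add: distrib_left exp_add[symmetric])
  ultimately show ?thesis
    using False by (simp add: kfun_feature_def field_simps)
qed

lemma nn_integral_exp_shift:
  assumes "0 \<le> a"
  shows "(\<integral>\<^sup>+t. ennreal (exp (- (r * (s + t)))) * indicator {0..a} t \<partial>lborel)
    = ennreal (exp (- (r * s)) * kfun_feature r a)"
  using assms by (intro nn_integral_has_integral_lebesgue' has_integral_exp_shift) auto

lemma nn_integral_exp_Ici:
  assumes "0 < c"
  shows "(\<integral>\<^sup>+r. ennreal (exp (- (r * c))) * indicator {0..} r \<partial>lborel) = ennreal (1 / c)"
proof -
  have "(\<integral>\<^sup>+r. ennreal (exp (- (r * c))) * indicator {0..} r \<partial>lborel) = 0 - (- exp (- (0 * c)) / c)"
    using assms
    by (intro nn_integral_FTC_atLeast[where F = "\<lambda>r. - exp (- (r * c)) / c"])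
       (measurable, auto intro!: derivative_eq_intros, real_asymp)
  then show ?thesis by simp
qed

lemma nn_integral_inverse_Icc:
  assumes "0 < s" "0 \<le> b"
  shows "(\<integral>\<^sup>+t. ennreal (1 / (s + t)) * indicator {0..b} t \<partial>lborel) = ennreal (ln (s + b) - ln s)"
proof -
  have "((\<lambda>t. 1 / (s + t)) has_integral (ln (s + b) - ln (s + 0))) {0..b}"
    using assms
    by (intro fundamental_theorem_of_calculus)
       (auto intro!: derivative_eq_intros simp: has_real_derivative_iff_has_vector_derivative[symmetric])
  then show ?thesis
    using assms by (intro nn_integral_has_integral_lebesgue') auto
qed

lemma kfun_zero_left [simp]: "kfun 0 b = 0"
  and kfun_zero_right [simp]: "kfun a 0 = 0"
  by (simp_all add: kfun_def eta_def)

lemma kfun_commute: "kfun a b = kfun b a"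
  by (simp add: kfun_def add.commute)

text \<open>The integrand is \<open>\<partial>k/\<partial>a\<close> at \<open>(s, b)\<close>. At the null point \<open>s = 0\<close> it is set to \<open>0\<close>:
  with \<open>ln 0 = 0\<close> the formula would give \<open>ln b\<close>, which may be negative.\<close>
lemma has_integral_kfun:
  assumes a: "0 < a" and b: "0 < b"
  shows "((\<lambda>s. if s = 0 then 0 else ln (s + b) - ln s) has_integral kfun a b) {0..a}"
proof -
  define F where "F s = (s + b) * ln (s + b) - s * ln s" for s :: real
  have "((\<lambda>s. (s + b) * ln (s + b)) \<longlongrightarrow> (0 + b) * ln (0 + b)) (at_right 0)"
    using b by (intro tendsto_intros) auto
  moreover have "((\<lambda>s::real. s * ln s) \<longlongrightarrow> 0) (at_right 0)"
    by real_asymp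
  ultimately have "(F \<longlongrightarrow> F 0) (at_right 0)"
    unfolding F_def by (auto intro: tendsto_eq_intros)
  moreover have "(F \<longlongrightarrow> F s) (at s)" if "0 < s" for s
    unfolding F_def using that b by (intro tendsto_intros) auto
  ultimately have cont: "continuous_on {0..a} F"
    using a by (intro continuous_on_IccI) (auto intro: tendsto_within_subset)
  have "(F has_vector_derivative (if s = 0 then 0 else ln (s + b) - ln s)) (at s)"
    if "s \<in> {0<..<a}" for s
  proof -
    have "(F has_real_derivative (ln (s + b) + (s + b) / (s + b)) - (ln s + s / s)) (at s)"
      unfolding F_def using that b by (auto intro!: derivative_eq_intros)
    then show ?thesis
      using that b by (simp add: has_real_derivative_iff_has_vector_derivative)
  qed
  then have "((\<lambda>s. if s = 0 then 0 else ln (s + b) - ln s) has_integral F a - F 0) {0..a}"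
    using a by (intro fundamental_theorem_of_calculus_interior[OF _ cont]) auto
  moreover have "F a - F 0 = kfun a b"
    unfolding F_def kfun_def eta_def using a b by (simp add: algebra_simps)
  ultimately show ?thesis by simp
qed

lemma kfun_nonneg:
  assumes "0 \<le> a" "0 \<le> b"
  shows "0 \<le> kfun a b"
proof (cases "a = 0 \<or> b = 0")
  case False
  with assms have "0 < a" "0 < b" by auto
  then show ?thesis
    by (intro has_integral_nonneg[OF has_integral_kfun]) auto
qed auto

lemma nn_integral_exp_kfun_feature:
  assumes s: "0 < s" and b: "0 \<le> b"
  shows "(\<integral>\<^sup>+r. ennreal (exp (- (r * s)) * kfun_feature r b) * indicator {0..} r \<partial>lborel)
    = ennreal (ln (s + b) - ln s)"
proof -
  have "(\<integral>\<^sup>+r. ennreal (exp (- (r * s)) * kfun_feature r b) * indicator {0..} r \<partial>lborel)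
      = (\<integral>\<^sup>+r. \<integral>\<^sup>+t. ennreal (exp (- (r * (s + t)))) * indicator {0..b} t * indicator {0..} r \<partial>lborel \<partial>lborel)"
    by (simp add: nn_integral_multc nn_integral_exp_shift[OF b])
  also have "\<dots> = (\<integral>\<^sup>+t. \<integral>\<^sup>+r. ennreal (exp (- (r * (s + t)))) * indicator {0..b} t * indicator {0..} r \<partial>lborel \<partial>lborel)"
    by (rule lborel_pair.Fubini') measurable
  also have "\<dots> = (\<integral>\<^sup>+t. ennreal (1 / (s + t)) * indicator {0..b} t \<partial>lborel)"
  proof (intro nn_integral_cong)
    fix t :: real
    show "(\<integral>\<^sup>+r. ennreal (exp (- (r * (s + t)))) * indicator {0..b} t * indicator {0..} r \<partial>lborel)
        = ennreal (1 / (s + t)) * indicator {0..b} t"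
      using s nn_integral_exp_Ici[of "s + t"]
      by (cases "t \<in> {0..b}") (auto simp: mult.commute[of _ "indicator {0..b} t"] nn_integral_cmult)
  qed
  also have "\<dots> = ennreal (ln (s + b) - ln s)"
    by (rule nn_integral_inverse_Icc[OF s b])
  finally show ?thesis .
qed

lemma nn_integral_kfun_feature_product:
  assumes a: "0 \<le> a" and b: "0 \<le> b"
  shows "(\<integral>\<^sup>+r. ennreal (kfun_feature r a * kfun_feature r b) * indicator {0..} r \<partial>lborel)
    = ennreal (kfun a b)"
proof (cases "a = 0 \<or> b = 0")
  case False
  with assms have a: "0 < a" and b: "0 < b" by auto
  have "ennreal (kfun_feature r a * kfun_feature r b)
      = (\<integral>\<^sup>+s. ennreal (exp (- (r * s)) * kfun_feature r b) * indicator {0..a} s \<partial>lborel)" for r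
  proof -
    have "(\<integral>\<^sup>+s. ennreal (exp (- (r * s)) * kfun_feature r b) * indicator {0..a} s \<partial>lborel)
        = (\<integral>\<^sup>+s. ennreal (exp (- (r * (0 + s)))) * indicator {0..a} s * ennreal (kfun_feature r b) \<partial>lborel)"
      using b by (intro nn_integral_cong) (simp add: ennreal_mult kfun_feature_nonneg mult_ac)
    also have "\<dots> = ennreal (kfun_feature r a) * ennreal (kfun_feature r b)"
      using a by (simp add: nn_integral_multc nn_integral_exp_shift del: add_0)
    finally show ?thesis
      using a b by (simp add: ennreal_mult kfun_feature_nonneg)
  qed
  then have "(\<integral>\<^sup>+r. ennreal (kfun_feature r a * kfun_feature r b) * indicator {0..} r \<partial>lborel)
      = (\<integral>\<^sup>+r. \<integral>\<^sup>+s. ennreal (exp (- (r * s)) * kfun_feature r b) * indicator {0..a} s * indicator {0..} r \<partial>lborel \<partial>lborel)"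
    by (simp add: nn_integral_multc)
  also have "\<dots> = (\<integral>\<^sup>+s. \<integral>\<^sup>+r. ennreal (exp (- (r * s)) * kfun_feature r b) * indicator {0..a} s * indicator {0..} r \<partial>lborel \<partial>lborel)"
    by (rule lborel_pair.Fubini') measurable
  also have "\<dots> = (\<integral>\<^sup>+s. ennreal (if s = 0 then 0 else ln (s + b) - ln s) * indicator {0..a} s \<partial>lborel)"
  proof (intro nn_integral_cong_AE)
    show "AE s in lborel. (\<integral>\<^sup>+r. ennreal (exp (- (r * s)) * kfun_feature r b) * indicator {0..a} s * indicator {0..} r \<partial>lborel)
        = ennreal (if s = 0 then 0 else ln (s + b) - ln s) * indicator {0..a} s"
      using AE_lborel_singleton[of 0]
    proof (rule eventually_mono)
      fix s :: real
      assume "s \<noteq> 0"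
      then show "(\<integral>\<^sup>+r. ennreal (exp (- (r * s)) * kfun_feature r b) * indicator {0..a} s * indicator {0..} r \<partial>lborel)
          = ennreal (if s = 0 then 0 else ln (s + b) - ln s) * indicator {0..a} s"
        using nn_integral_exp_kfun_feature[of s b] b
        by (cases "s \<in> {0..a}") (auto simp: mult.commute[of _ "indicator {0..a} s"] nn_integral_cmult mult.assoc)
    qed
  qed
  also have "\<dots> = ennreal (kfun a b)"
    using a b by (intro nn_integral_has_integral_lebesgue' has_integral_kfun) auto
  finally show ?thesis .
qed auto

lemma kfun_integral_representation:
  assumes "0 \<le> a" "0 \<le> b"
  shows "integrable lborel (\<lambda>r. kfun_feature r a * kfun_feature r b * indicator {0..} r)"
    and "kfun a b = (\<integral>r. kfun_feature r a * kfun_feature r b * indicator {0..} r \<partial>lborel)"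
proof -
  have nonneg: "AE r in lborel. 0 \<le> kfun_feature r a * kfun_feature r b * indicator {0..} r"
    using assms by (simp add: kfun_feature_nonneg)
  have nn_integral: "(\<integral>\<^sup>+r. ennreal (kfun_feature r a * kfun_feature r b * indicator {0..} r) \<partial>lborel)
      = ennreal (kfun a b)"
    using nn_integral_kfun_feature_product[OF assms]
    by (simp add: indicator_mult_ennreal mult.commute)
  show "integrable lborel (\<lambda>r. kfun_feature r a * kfun_feature r b * indicator {0..} r)"
    using nonneg nn_integral by (intro integrableI_nonneg) auto
  show "kfun a b = (\<integral>r. kfun_feature r a * kfun_feature r b * indicator {0..} r \<partial>lborel)"
    using nonneg nn_integral kfun_nonneg[OF assms] by (subst integral_eq_nn_integral) auto
qed

lemma kfun_quadratic_form_nonneg: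
  fixes c xs :: "nat \<Rightarrow> real"
  assumes "\<forall>i<n. 0 \<le> xs i"
  shows "0 \<le> (\<Sum>i<n. \<Sum>j<n. c i * c j * kfun (xs i) (xs j))"
proof -
  define f where "f i j r = c i * c j * (kfun_feature r (xs i) * kfun_feature r (xs j) * indicator {0..} r)"
    for i j r
  have integrable: "integrable lborel (f i j)" if "i < n" "j < n" for i j
    unfolding f_def using assms that by (intro integrable_mult_right kfun_integral_representation) auto
  have "(\<Sum>i<n. \<Sum>j<n. c i * c j * kfun (xs i) (xs j)) = (\<Sum>i<n. \<Sum>j<n. \<integral>r. f i j r \<partial>lborel)"
    unfolding f_def using assms by (intro sum.cong refl) (simp add: kfun_integral_representation(2))
  also have "\<dots> = (\<Sum>i<n. \<integral>r. (\<Sum>j<n. f i j r) \<partial>lborel)"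
    using integrable by (intro sum.cong refl Bochner_Integration.integral_sum[symmetric]) auto
  also have "\<dots> = (\<integral>r. (\<Sum>i<n. \<Sum>j<n. f i j r) \<partial>lborel)"
    using integrable by (intro Bochner_Integration.integral_sum[symmetric] Bochner_Integration.integrable_sum) auto
  also have "\<dots> = (\<integral>r. (\<Sum>i<n. c i * kfun_feature r (xs i))\<^sup>2 * indicator {0..} r \<partial>lborel)"
    unfolding f_def power2_eq_square sum_distrib_left sum_distrib_right
    by (intro Bochner_Integration.integral_cong sum.cong refl) (simp add: mult_ac)
  also have "\<dots> \<ge> 0"
    by (intro Bochner_Integration.integral_nonneg) simp
  finally show ?thesis .
qed

lemma pd_kernel_kfun_comp:
  assumes "\<And>u. u \<in> S \<Longrightarrow> 0 \<le> f u"
  shows "pd_kernel S (\<lambda>u v. kfun (f u) (f v))"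
  unfolding pd_kernel_def using assms
  by (auto simp: kfun_commute intro!: kfun_quadratic_form_nonneg)

lemma pd_kernel_sum:
  assumes "finite I" "\<And>i. i \<in> I \<Longrightarrow> pd_kernel S (K i)"
  shows "pd_kernel S (\<lambda>u v. \<Sum>i\<in>I. K i u v)"
  unfolding pd_kernel_def
proof (intro conjI ballI allI impI)
  fix u v assume "u \<in> S" "v \<in> S"
  then show "(\<Sum>i\<in>I. K i u v) = (\<Sum>i\<in>I. K i v u)"
    using assms(2) by (intro sum.cong) (auto simp: pd_kernel_def)
next
  fix n :: nat and a :: "nat \<Rightarrow> real" and xs
  assume "\<forall>i<n. xs i \<in> S"
  then have "0 \<le> (\<Sum>i\<in>I. \<Sum>k<n. \<Sum>l<n. a k * a l * K i (xs k) (xs l))"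
    using assms(2) by (auto simp: pd_kernel_def intro: sum_nonneg)
  also have "\<dots> = (\<Sum>k<n. \<Sum>l<n. a k * a l * (\<Sum>i\<in>I. K i (xs k) (xs l)))"
    by (simp add: sum_distrib_left sum.swap[of _ I])
  finally show "0 \<le> (\<Sum>k<n. \<Sum>l<n. a k * a l * (\<Sum>i\<in>I. K i (xs k) (xs l)))" .
qed

lemma krein_kernel_diff:
  assumes "pd_kernel S K" "pd_kernel S L"
  shows "krein_kernel S (\<lambda>u v. K u v - L u v)"
  unfolding krein_kernel_def using assms by blast

lemma pd_kernel_K1: "pd_kernel (unit_cube :: ('c::finite \<Rightarrow> real) set) K1"
proof -
  have "pd_kernel (unit_cube :: ('c \<Rightarrow> real) set) (\<lambda>v w. kfun (\<Sum>c\<in>UNIV. v c) (\<Sum>c\<in>UNIV. w c))"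
    by (intro pd_kernel_kfun_comp sum_nonneg) (auto simp: unit_cube_def)
  then show ?thesis by (simp add: K1_def [abs_def])
qed

lemma pd_kernel_K2: "pd_kernel (unit_cube :: ('c::finite \<Rightarrow> real) set) K2"
proof -
  have "pd_kernel (unit_cube :: ('c \<Rightarrow> real) set) (\<lambda>v w. \<Sum>c\<in>UNIV. kfun (v c) (w c))"
    by (intro pd_kernel_sum pd_kernel_kfun_comp) (auto simp: unit_cube_def)
  then show ?thesis by (simp add: K2_def [abs_def])
qed

definition row_info :: "'c set \<Rightarrow> ('c \<Rightarrow> real) \<Rightarrow> ('c \<Rightarrow> real) \<Rightarrow> real" where
  "row_info C Q f = (\<Sum>c\<in>C. if f c = 0 then 0 else f c * ln (f c / ((\<Sum>c'\<in>C. f c') * Q c)))"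

lemma mutual_info_eq_sum_row_info:
  "mutual_info A C p = (\<Sum>a\<in>A. row_info C (\<lambda>c. \<Sum>a'\<in>A. p a' c) (p a))"
  by (simp add: mutual_info_def row_info_def)

lemma row_info_eq:
  assumes "finite C" and nonneg: "\<And>c. c \<in> C \<Longrightarrow> 0 \<le> f c" and le: "\<And>c. c \<in> C \<Longrightarrow> f c \<le> Q c"
  shows "row_info C Q f = eta (\<Sum>c\<in>C. f c) - (\<Sum>c\<in>C. eta (f c)) - (\<Sum>c\<in>C. f c * ln (Q c))"
proof -
  let ?P = "\<Sum>c\<in>C. f c"
  have "(if f c = 0 then 0 else f c * ln (f c / (?P * Q c))) = - eta (f c) - f c * ln ?P - f c * ln (Q c)"
    if c: "c \<in> C" for c
  proof (cases "f c = 0")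
    case False
    with nonneg[OF c] have pos: "0 < f c" by simp
    moreover have "f c \<le> ?P"
      using assms(1) c nonneg by (intro member_le_sum) auto
    moreover have "f c \<le> Q c" using le[OF c] .
    ultimately have "ln (f c / (?P * Q c)) = ln (f c) - ln ?P - ln (Q c)"
      by (simp add: ln_div ln_mult)
    with False show ?thesis
      by (simp add: eta_def right_diff_distrib)
  qed (simp add: eta_def)
  then have "row_info C Q f = (\<Sum>c\<in>C. - eta (f c) - f c * ln ?P - f c * ln (Q c))"
    unfolding row_info_def by (rule sum.cong[OF refl])
  also have "\<dots> = eta ?P - (\<Sum>c\<in>C. eta (f c)) - (\<Sum>c\<in>C. f c * ln (Q c))"
    by (simp add: sum_subtractf sum_negf sum_distrib_right eta_def)
  finally show ?thesis .
qed

lemma merge_pmf_None [simp]: "merge_pmf p x y None = (\<lambda>c. p x c + p y c)"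
  and merge_pmf_Some [simp]: "merge_pmf p x y (Some a) = p a"
  by (simp_all add: merge_pmf_def fun_eq_iff)

lemma sum_merged_support:
  assumes "finite X"
  shows "(\<Sum>u\<in>merged_support X x y. g u) = g None + (\<Sum>a\<in>X - {x, y}. g (Some a))"
  unfolding merged_support_def using assms by (subst sum.insert) (auto simp: sum.reindex)

lemma sum_merge_pmf:
  assumes "finite X" "x \<in> X" "y \<in> X" "x \<noteq> y"
  shows "(\<Sum>u\<in>merged_support X x y. merge_pmf p x y u c) = (\<Sum>a\<in>X. p a c)"
proof -
  have "(\<Sum>a\<in>X. p a c) = p x c + (\<Sum>a\<in>X - {x}. p a c)"
    using assms by (intro sum.remove) auto
  also have "(\<Sum>a\<in>X - {x}. p a c) = p y c + (\<Sum>a\<in>X - {x} - {y}. p a c)"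
    using assms by (intro sum.remove) auto
  finally show ?thesis
    using assms(1) by (simp add: sum_merged_support Diff_insert2[symmetric] add.assoc)
qed

lemma MIL_eq_kfun:
  fixes p :: "'x \<Rightarrow> 'c \<Rightarrow> real"
  assumes fin: "finite X" "finite C" and xy: "x \<in> X" "y \<in> X" "x \<noteq> y"
    and nonneg: "\<And>a c. a \<in> X \<Longrightarrow> c \<in> C \<Longrightarrow> 0 \<le> p a c"
  shows "MIL p X C x y = kfun (\<Sum>c\<in>C. p x c) (\<Sum>c\<in>C. p y c) - (\<Sum>c\<in>C. kfun (p x c) (p y c))"
proof -
  define Q where "Q c = (\<Sum>a\<in>X. p a c)" for c
  define G where "G f = eta (\<Sum>c\<in>C. f c) - (\<Sum>c\<in>C. eta (f c)) - (\<Sum>c\<in>C. f c * ln (Q c))"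
    for f :: "'c \<Rightarrow> real"
  let ?R = "row_info C Q"
  have pair_le: "p x c + p y c \<le> Q c" if "c \<in> C" for c
    using sum_mono2[OF fin(1), of "{x, y}" "\<lambda>a. p a c"] xy nonneg that by (simp add: Q_def)
  then have "p x c \<le> Q c" "p y c \<le> Q c" if "c \<in> C" for c
    using nonneg[OF xy(1) that] nonneg[OF xy(2) that] pair_le[OF that] by linarith+
  then have rows: "?R (p x) = G (p x)" "?R (p y) = G (p y)" "?R (\<lambda>c. p x c + p y c) = G (\<lambda>c. p x c + p y c)"
    unfolding G_def using fin(2) xy nonneg pair_le by (auto intro!: row_info_eq add_nonneg_nonneg)
  have "mutual_info X C p = ?R (p x) + ?R (p y) + (\<Sum>a\<in>X - {x, y}. ?R (p a))"
    unfolding mutual_info_eq_sum_row_info Q_def[symmetric]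
    using fin(1) xy by (simp add: sum.remove[of X x] sum.remove[of "X - {x}" y] Diff_insert2[symmetric] add.assoc)
  moreover have "mutual_info (merged_support X x y) C (merge_pmf p x y)
      = ?R (\<lambda>c. p x c + p y c) + (\<Sum>a\<in>X - {x, y}. ?R (p a))"
    unfolding mutual_info_eq_sum_row_info sum_merge_pmf[OF fin(1) xy] Q_def[symmetric]
    using fin(1) by (simp add: sum_merged_support)
  ultimately have "MIL p X C x y = G (p x) + G (p y) - G (\<lambda>c. p x c + p y c)"
    by (simp add: MIL_def rows)
  then show ?thesis
    by (simp add: G_def kfun_def sum.distrib sum_subtractf distrib_right)
qed

theorem theorem4:
  fixes p :: "'x::finite \<Rightarrow> 'c::finite \<Rightarrow> real" and x y :: 'x
  assumes nonneg: "\<And>a c. 0 \<le> p a c"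
    and total: "(\<Sum>a\<in>UNIV. \<Sum>c\<in>UNIV. p a c) = 1"
    and xy: "x \<noteq> y"
  shows "MIL p UNIV UNIV x y = K1 (\<lambda>c. p x c) (\<lambda>c. p y c) - K2 (\<lambda>c. p x c) (\<lambda>c. p y c)
    \<and> pd_kernel (unit_cube :: ('c \<Rightarrow> real) set) K1
    \<and> pd_kernel (unit_cube :: ('c \<Rightarrow> real) set) K2
    \<and> krein_kernel (unit_cube :: ('c \<Rightarrow> real) set) (\<lambda>v w. K1 v w - K2 v w)"
proof -
  have "MIL p UNIV UNIV x y = K1 (\<lambda>c. p x c) (\<lambda>c. p y c) - K2 (\<lambda>c. p x c) (\<lambda>c. p y c)"
    using MIL_eq_kfun[of UNIV UNIV x y p] nonneg xy by (simp add: K1_def K2_def)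
  then show ?thesis
    using pd_kernel_K1 pd_kernel_K2 krein_kernel_diff[OF pd_kernel_K1 pd_kernel_K2] by blast
qed

end
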